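(* Let $m\ge1$, $n\ge0$, $0\le i\le m$. Then the inclusion $\Lambda^{m,n}_i=(\Lambda^m_i\times\Delta^n)\cup(\Delta^m\times\partial\Delta^n)\hookrightarrow\Delta^m\times\Delta^n$ is an $m$-expansion. Likewise, for $m\ge0$, $n\ge1$, $0\le j\le n$, the inclusion $\tilde\Lambda^{m,n}_j=(\partial\Delta^m\times\Delta^n)\cup(\Delta^m\times\Lambda^n_j)\hookrightarrow\Delta^m\times\Delta^n$ is an $n$-expansion.
   Context: $\Lambda^p_i=\bigcup_{j\ne i}\partial_j\Delta^p$ is the horn and $\partial\Delta^p$ the boundary. For $m>0$, an inclusion of simplicial sets $S\hookrightarrow T$ is an $m$-expansion if there is a filtration $S=F_{-1}T\subset F_0T\subset F_1T\subset\cdots$ with $T=\bigcup_\ell F_\ell T$, a weakly monotone sequence $n_\ell\ge m$ ($\ell\ge0$), indices $0\le i_\ell\le n_\ell$, and maps $x_\ell:\Delta^{n_\ell}\to F_\ell T$, $y_\ell:\Lambda^{n_\ell}_{i_\ell}\to F_{\ell-1}T$ making $F_\ell T$ the pushout of $F_{\ell-1}T\leftarrow\Lambda^{n_\ell}_{i_\ell}\hookrightarrow\Delta^{n_\ell}$. *)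

theory Defs
  imports Main "HOL-Library.Extended_Nat"
begin

(* A simplicial set is given by graded carriers X k (the k-simplices) and an
   action: act k \<theta> x is the pullback of x \<in> X l along \<theta> : [k] \<rightarrow> [l]
   (a monotone map {0..k} \<rightarrow> {0..l}). *)

definition mono_op :: "nat \<Rightarrow> nat \<Rightarrow> (nat \<Rightarrow> nat) \<Rightarrow> bool" where
  "mono_op k l \<theta> \<longleftrightarrow> (\<forall>j\<le>k. \<theta> j \<le> l) \<and> (\<forall>j j'. j \<le> j' \<longrightarrow> j' \<le> k \<longrightarrow> \<theta> j \<le> \<theta> j')"

definition is_sset :: "(nat \<Rightarrow> 'a set) \<Rightarrow> (nat \<Rightarrow> (nat \<Rightarrow> nat) \<Rightarrow> 'a \<Rightarrow> 'a) \<Rightarrow> bool" where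
  "is_sset X act \<longleftrightarrow>
     (\<forall>k l. k \<noteq> l \<longrightarrow> X k \<inter> X l = {}) \<and>
     (\<forall>k l \<theta> x. mono_op k l \<theta> \<and> x \<in> X l \<longrightarrow> act k \<theta> x \<in> X k) \<and>
     (\<forall>k x. x \<in> X k \<longrightarrow> act k id x = x) \<and>
     (\<forall>k l p \<theta> \<phi> x. mono_op k l \<theta> \<and> mono_op l p \<phi> \<and> x \<in> X p \<longrightarrow>
         act k \<theta> (act l \<phi> x) = act k (\<phi> \<circ> \<theta>) x) \<and>
     (\<forall>k l \<theta> \<theta>' x. mono_op k l \<theta> \<and> x \<in> X l \<and> (\<forall>j\<le>k. \<theta> j = \<theta>' j) \<longrightarrow>
         act k \<theta> x = act k \<theta>' x)"

definition subcx :: "(nat \<Rightarrow> 'a set) \<Rightarrow> (nat \<Rightarrow> 'a set) \<Rightarrow> (nat \<Rightarrow> (nat \<Rightarrow> nat) \<Rightarrow> 'a \<Rightarrow> 'a) \<Rightarrow> bool" where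
  "subcx S X act \<longleftrightarrow> (\<forall>k. S k \<subseteq> X k) \<and>
     (\<forall>k l \<theta> x. mono_op k l \<theta> \<and> x \<in> S l \<longrightarrow> act k \<theta> x \<in> S k)"

definition smap :: "(nat \<Rightarrow> 'a set) \<Rightarrow> (nat \<Rightarrow> (nat \<Rightarrow> nat) \<Rightarrow> 'a \<Rightarrow> 'a) \<Rightarrow>
    (nat \<Rightarrow> 'b set) \<Rightarrow> (nat \<Rightarrow> (nat \<Rightarrow> nat) \<Rightarrow> 'b \<Rightarrow> 'b) \<Rightarrow> ('a \<Rightarrow> 'b) \<Rightarrow> bool" where
  "smap X actX Y actY f \<longleftrightarrow> (\<forall>k. \<forall>x\<in>X k. f x \<in> Y k) \<and>
     (\<forall>k l \<theta> x. mono_op k l \<theta> \<and> x \<in> X l \<longrightarrow> f (actX k \<theta> x) = actY k \<theta> (f x))"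

(* Pushout of sets: the square  C -g-> A,  C -h-> B,  A -f-> P,  B -k-> P  is a pushout iff it
   commutes and the canonical map from the standard pushout (A \<uplus> B)/~ to P is a bijection,
   where ~ is the equivalence relation generated by Inl (g c) ~ Inr (h c). *)
definition set_pushout :: "'c set \<Rightarrow> 'a set \<Rightarrow> 'b set \<Rightarrow> ('c \<Rightarrow> 'a) \<Rightarrow> ('c \<Rightarrow> 'b) \<Rightarrow>
    'p set \<Rightarrow> ('a \<Rightarrow> 'p) \<Rightarrow> ('b \<Rightarrow> 'p) \<Rightarrow> bool" where
  "set_pushout C A B g h P f k \<longleftrightarrow>
     g ` C \<subseteq> A \<and> h ` C \<subseteq> B \<and>
     (\<forall>c\<in>C. f (g c) = k (h c)) \<and>
     f ` A \<union> k ` B = P \<and>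
     (let D = Inl ` A \<union> Inr ` B;
          E = {(Inl (g c), Inr (h c)) | c. c \<in> C}
      in \<forall>u\<in>D. \<forall>v\<in>D. (case_sum f k u = case_sum f k v) \<longleftrightarrow> (u, v) \<in> (E \<union> E\<inverse>)\<^sup>*)"

(* The standard simplex \<Delta>^p: k-simplices are monotone maps [k] \<rightarrow> [p], written as sorted lists *)
definition simplex :: "nat \<Rightarrow> nat \<Rightarrow> nat list set" where
  "simplex p k = {xs. length xs = Suc k \<and> sorted xs \<and> set xs \<subseteq> {0..p}}"

definition act_list :: "nat \<Rightarrow> (nat \<Rightarrow> nat) \<Rightarrow> nat list \<Rightarrow> nat list" where
  "act_list k \<theta> xs = map (\<lambda>j. xs ! \<theta> j) [0..<Suc k]"

(* horn \<Lambda>^p_i = union of the faces d_j \<Delta>^p, j \<noteq> i *)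
definition horn :: "nat \<Rightarrow> nat \<Rightarrow> nat \<Rightarrow> nat list set" where
  "horn p i k = {xs \<in> simplex p k. \<exists>j\<le>p. j \<noteq> i \<and> j \<notin> set xs}"

(* boundary \<partial>\<Delta>^p = union of all faces *)
definition bdry :: "nat \<Rightarrow> nat \<Rightarrow> nat list set" where
  "bdry p k = {xs \<in> simplex p k. \<exists>j\<le>p. j \<notin> set xs}"

definition act_prod :: "nat \<Rightarrow> (nat \<Rightarrow> nat) \<Rightarrow> nat list \<times> nat list \<Rightarrow> nat list \<times> nat list" where
  "act_prod k \<theta> xy = (act_list k \<theta> (fst xy), act_list k \<theta> (snd xy))"

definition prism :: "nat \<Rightarrow> nat \<Rightarrow> nat \<Rightarrow> (nat list \<times> nat list) set" where
  "prism m n k = simplex m k \<times> simplex n k"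

definition horn_prism1 :: "nat \<Rightarrow> nat \<Rightarrow> nat \<Rightarrow> nat \<Rightarrow> (nat list \<times> nat list) set" where
  "horn_prism1 m n i k = (horn m i k \<times> simplex n k) \<union> (simplex m k \<times> bdry n k)"

definition horn_prism2 :: "nat \<Rightarrow> nat \<Rightarrow> nat \<Rightarrow> nat \<Rightarrow> (nat list \<times> nat list) set" where
  "horn_prism2 m n j k = (bdry m k \<times> simplex n k) \<union> (simplex m k \<times> horn n j k)"

(* Pushout square in sSet: simplicial maps, levelwise a pushout of sets.
   Square: F_{l-1} <-y- \<Lambda>^p_i -incl-> \<Delta>^p,  F_{l-1} -incl-> F_l <-x- \<Delta>^p *)

(* The filtration F 0 = S (= F_{-1}), F (Suc l) = F_l,
   has length N (finite or infinite); step l (enat l < N) attaches a horn \<Lambda>^{n l}_{i l} \<subseteq> \<Delta>^{n l}. *)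
definition expansion :: "nat \<Rightarrow> (nat \<Rightarrow> 'a set) \<Rightarrow> (nat \<Rightarrow> 'a set) \<Rightarrow>
    (nat \<Rightarrow> (nat \<Rightarrow> nat) \<Rightarrow> 'a \<Rightarrow> 'a) \<Rightarrow> bool" where
  "expansion m S T act \<longleftrightarrow> is_sset T act \<and> subcx S T act \<and>
    (\<exists>(N::enat) (F :: nat \<Rightarrow> nat \<Rightarrow> 'a set) (nn :: nat \<Rightarrow> nat) (ii :: nat \<Rightarrow> nat)
        (x :: nat \<Rightarrow> nat list \<Rightarrow> 'a) (y :: nat \<Rightarrow> nat list \<Rightarrow> 'a).
       F 0 = S \<and>
       (\<forall>l. enat l \<le> N \<longrightarrow> subcx (F l) T act) \<and>
       (\<forall>k. T k = (\<Union>l\<in>{l. enat l \<le> N}. F l k)) \<and>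
       (\<forall>l. enat (Suc l) < N \<longrightarrow> nn l \<le> nn (Suc l)) \<and>
       (\<forall>l. enat l < N \<longrightarrow>
          m \<le> nn l \<and> ii l \<le> nn l \<and>
          (\<forall>k. F l k \<subseteq> F (Suc l) k) \<and>
          smap (simplex (nn l)) act_list (F (Suc l)) act (x l) \<and>
          smap (horn (nn l) (ii l)) act_list (F l) act (y l) \<and>
          (\<forall>k. set_pushout (horn (nn l) (ii l) k) (F l k) (simplex (nn l) k) (y l) id
                 (F (Suc l) k) id (x l))))"

end

theory Submission
  imports Defs "HOL-Library.Product_Lexorder"
begin

text \<open>
A simplex (a, b) of \<open>\<Delta>^m \<times> \<Delta>^n\<close> is determined up to degeneracy by its vertex set
\<open>set (zip a b)\<close>, a chain in the grid poset \<open>[m] \<times> [n]\<close>; the subcomplexes used here consist of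
the simplices whose vertex set lies in a given down-closed family of chains. The inclusion of
such a subcomplex into the prism is an expansion once the missing chains are listed as a
shelling \<open>\<tau>\<^sub>0, \<tau>\<^sub>1, \<dots>\<close>: every facet of \<open>\<tau>\<^sub>l\<close> but the one opposite a chosen vertex
lies in the previous stage and that one does not, so attaching \<open>\<tau>\<^sub>l\<close> is a pushout along a
horn of dimension \<open>card \<tau>\<^sub>l - 1\<close>.

For \<open>\<Lambda>^{m,n}_i\<close> the missing chains are those meeting every column \<open>j \<noteq> i\<close> and every row.
Such a chain is completed by its apex \<open>(i, b)\<close>, where b is the largest row it uses in column
\<open>i - 1\<close> (the smallest row in column 1 if \<open>i = 0\<close>); the completed chains, ordered by size and
then by b, form the shelling, the chosen vertex being the apex. Removing another vertex gives
either a chain of the horn prism or a chain whose completion comes earlier, whereas the facet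
opposite the apex lies in no earlier chain. Completed chains meet every column, so they have
at least \<open>m + 1\<close> vertices. The second statement follows by transposing the grid.
\<close>

lemma set_pushout_attach:
  fixes A :: "'a set" and B :: "'c set" and k :: "'c \<Rightarrow> 'a" and g :: "'c \<Rightarrow> 'a"
  assumes "C \<subseteq> B" "inj_on k B" "k ` C \<subseteq> A" "k ` (B - C) \<inter> A = {}" "\<forall>c\<in>C. g c = k c"
  shows "set_pushout C A B g id (A \<union> k ` B) id k"
proof -
  define E :: "('a + 'c) rel" where "E = {(Inl (g c), Inr (id c)) | c. c \<in> C}"
  have sound: "case_sum id k u = case_sum id k v" if "(u, v) \<in> (E \<union> E\<inverse>)\<^sup>*" for u v
    using that
  proof (induction rule: rtrancl_induct)
    case (step v w)
    then show ?case using assms(5) by (auto simp: E_def)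
  qed simp
  have complete: "(u, v) \<in> (E \<union> E\<inverse>)\<^sup>*"
    if uv: "u \<in> Inl ` A \<union> Inr ` B" "v \<in> Inl ` A \<union> Inr ` B" "case_sum id k u = case_sum id k v"
    for u v
  proof -
    have glue: "(Inl (k b), Inr b) \<in> E" if "b \<in> B" "k b \<in> A" for b
      using that assms(4,5) unfolding E_def by force
    consider a a' where "u = Inl a" "v = Inl a'"
      | a b where "u = Inl a" "v = Inr b" "a \<in> A" "b \<in> B"
      | a b where "u = Inr b" "v = Inl a" "a \<in> A" "b \<in> B"
      | b b' where "u = Inr b" "v = Inr b'" "b \<in> B" "b' \<in> B"
      using uv(1,2) by blast
    then show ?thesis
    proof cases
      case 2
      then have "(u, v) \<in> E" using uv(3) glue[of b] by simp
      then show ?thesis by blast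
    next
      case 3
      then have "(v, u) \<in> E" using uv(3) glue[of b] by simp
      then show ?thesis by blast
    next
      case 4
      then show ?thesis using uv(3) assms(2) by (auto simp: inj_on_def)
    qed (use uv(3) in simp)
  qed
  have "\<forall>u\<in>Inl ` A \<union> Inr ` B. \<forall>v\<in>Inl ` A \<union> Inr ` B.
      case_sum id k u = case_sum id k v \<longleftrightarrow> (u, v) \<in> (E \<union> E\<inverse>)\<^sup>*"
    using sound complete by blast
  then show ?thesis
    unfolding set_pushout_def Let_def
    using assms(1,3,5) unfolding E_def by force
qed

subsection \<open>The prism as a simplicial set\<close>

lemma length_act_list [simp]: "length (act_list k \<theta> xs) = Suc k"
  by (simp add: act_list_def)

lemma nth_act_list [simp]: "j \<le> k \<Longrightarrow> act_list k \<theta> xs ! j = xs ! \<theta> j"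
  by (simp add: act_list_def del: upt_Suc)

lemma length_simplex: "xs \<in> simplex p k \<Longrightarrow> length xs = Suc k"
  by (simp add: simplex_def)

lemma act_list_simplex:
  assumes "xs \<in> simplex p l" "mono_op k l \<theta>"
  shows "act_list k \<theta> xs \<in> simplex p k"
proof -
  have len: "length xs = Suc l" and sorted: "sorted xs" and range: "set xs \<subseteq> {0..p}"
    using assms(1) by (auto simp: simplex_def)
  have bound: "\<And>j. j \<le> k \<Longrightarrow> \<theta> j \<le> l"
    and mono: "\<And>j j'. j \<le> j' \<Longrightarrow> j' \<le> k \<Longrightarrow> \<theta> j \<le> \<theta> j'"
    using assms(2) by (auto simp: mono_op_def)
  have "sorted (act_list k \<theta> xs)"
    unfolding sorted_iff_nth_mono
    using bound mono len sorted by (auto intro!: sorted_nth_mono simp: less_Suc_eq_le)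
  moreover have "set (act_list k \<theta> xs) \<subseteq> {0..p}"
    using bound len range nth_mem by (fastforce simp: in_set_conv_nth less_Suc_eq_le)
  ultimately show ?thesis by (simp add: simplex_def)
qed

lemma act_list_id:
  assumes "length xs = Suc k"
  shows "act_list k id xs = xs"
proof -
  have "[0..<Suc k] = [0..<length xs]" using assms by simp
  then show ?thesis unfolding act_list_def by (simp only: id_apply map_nth)
qed

lemma act_list_comp:
  assumes "mono_op k l \<theta>"
  shows "act_list k \<theta> (act_list l \<phi> xs) = act_list k (\<phi> \<circ> \<theta>) xs"
  using assms unfolding act_list_def mono_op_def
  by (auto simp: less_Suc_eq_le simp del: upt_Suc)

lemma act_list_cong:
  assumes "\<forall>j\<le>k. \<theta> j = \<theta>' j"
  shows "act_list k \<theta> xs = act_list k \<theta>' xs"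
  using assms unfolding act_list_def by (auto simp del: upt_Suc)

lemma is_sset_prism: "is_sset (prism m n) act_prod"
  unfolding is_sset_def
proof (intro conjI allI impI)
  fix k l :: nat
  assume "k \<noteq> l"
  then have "a \<notin> simplex m l" if "a \<in> simplex m k" for a
    using that length_simplex by (metis nat.inject)
  then show "prism m n k \<inter> prism m n l = {}" unfolding prism_def by blast
next
  fix k l \<theta> x
  assume "mono_op k l \<theta> \<and> x \<in> prism m n l"
  then show "act_prod k \<theta> x \<in> prism m n k"
    by (cases x) (simp add: prism_def act_prod_def; blast intro: act_list_simplex)
next
  fix k x
  assume "x \<in> prism m n k"
  then show "act_prod k id x = x"
    by (cases x) (simp add: prism_def act_prod_def; metis act_list_id length_simplex)
next
  fix k l p \<theta> \<phi> x
  assume "mono_op k l \<theta> \<and> mono_op l p \<phi> \<and> x \<in> prism m n p"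
  then show "act_prod k \<theta> (act_prod l \<phi> x) = act_prod k (\<phi> \<circ> \<theta>) x"
    by (simp add: act_prod_def act_list_comp)
next
  fix k l \<theta> \<theta>' x
  assume "mono_op k l \<theta> \<and> x \<in> prism m n l \<and> (\<forall>j\<le>k. \<theta> j = \<theta>' j)"
  then show "act_prod k \<theta> x = act_prod k \<theta>' x"
    unfolding act_prod_def using act_list_cong[of k \<theta> \<theta>'] by simp
qed

subsection \<open>Subcomplexes of the prism given by families of grid chains\<close>

definition grid_le :: "nat \<times> nat \<Rightarrow> nat \<times> nat \<Rightarrow> bool" where
  "grid_le u v \<longleftrightarrow> fst u \<le> fst v \<and> snd u \<le> snd v"

definition grid_chain :: "nat \<Rightarrow> nat \<Rightarrow> (nat \<times> nat) set \<Rightarrow> bool" where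
  "grid_chain m n C \<longleftrightarrow> finite C \<and> C \<subseteq> {0..m} \<times> {0..n} \<and>
     (\<forall>u\<in>C. \<forall>v\<in>C. grid_le u v \<or> grid_le v u)"

definition vertices :: "nat list \<times> nat list \<Rightarrow> (nat \<times> nat) set" where
  "vertices ab = set (zip (fst ab) (snd ab))"

definition subprism :: "nat \<Rightarrow> nat \<Rightarrow> (nat \<times> nat) set set \<Rightarrow> nat \<Rightarrow> (nat list \<times> nat list) set" where
  "subprism m n K k = {ab \<in> prism m n k. vertices ab \<in> K}"

definition down_closed :: "'a set set \<Rightarrow> bool" where
  "down_closed K \<longleftrightarrow> (\<forall>A\<in>K. \<forall>B. B \<subseteq> A \<longrightarrow> B \<in> K)"

lemma grid_le_refl [simp]: "grid_le u u"
  by (simp add: grid_le_def)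

lemma grid_le_imp_less_eq: "grid_le u v \<Longrightarrow> u \<le> v"
  by (cases u; cases v) (auto simp: grid_le_def less_eq_prod_def)

lemma grid_chain_subset: "grid_chain m n B \<Longrightarrow> A \<subseteq> B \<Longrightarrow> grid_chain m n A"
  unfolding grid_chain_def by (meson finite_subset subset_trans subsetD)

lemma grid_chain_insert:
  assumes "grid_chain m n C" "w \<in> {0..m} \<times> {0..n}" "\<And>u. u \<in> C \<Longrightarrow> grid_le u w \<or> grid_le w u"
  shows "grid_chain m n (insert w C)"
  using assms unfolding grid_chain_def by auto

lemma grid_chain_enumeration:
  assumes "grid_chain m n C"
  obtains vs where "distinct vs" "set vs = C"
    "\<And>t t'. t \<le> t' \<Longrightarrow> t' < length vs \<Longrightarrow> grid_le (vs ! t) (vs ! t')"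
proof
  define vs where "vs = sorted_list_of_set C"
  have fin: "finite C" using assms by (simp add: grid_chain_def)
  show "distinct vs" "set vs = C" using fin by (auto simp: vs_def)
  fix t t' assume tt': "t \<le> t'" "t' < length vs"
  have "vs ! t \<le> vs ! t'" using tt' by (simp add: vs_def sorted_nth_mono)
  moreover have "vs ! t \<in> C" "vs ! t' \<in> C"
    using tt' fin nth_mem by (metis le_less_trans set_sorted_list_of_set vs_def)+
  then have "grid_le (vs ! t) (vs ! t') \<or> grid_le (vs ! t') (vs ! t)"
    using assms by (auto simp: grid_chain_def)
  ultimately show "grid_le (vs ! t) (vs ! t')" using grid_le_imp_less_eq by (metis order_antisym)
qed

lemma fst_vertices: "length a = length b \<Longrightarrow> fst ` vertices (a, b) = set a"
  by (simp add: vertices_def) (metis map_fst_zip set_map)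

lemma snd_vertices: "length a = length b \<Longrightarrow> snd ` vertices (a, b) = set b"
  by (simp add: vertices_def) (metis map_snd_zip set_map)

lemma grid_chain_vertices:
  assumes "ab \<in> prism m n k"
  shows "grid_chain m n (vertices ab)"
proof -
  obtain a b where ab: "ab = (a, b)" by (cases ab)
  have a: "length a = Suc k" "sorted a" "set a \<subseteq> {0..m}"
    and b: "length b = Suc k" "sorted b" "set b \<subseteq> {0..n}"
    using assms ab by (auto simp: prism_def simplex_def)
  have ordered: "grid_le (a ! t, b ! t) (a ! t', b ! t')" if "t \<le> t'" "t' < Suc k" for t t'
    using that a b by (simp add: grid_le_def sorted_nth_mono)
  have comparable: "grid_le u v \<or> grid_le v u" if uv: "u \<in> vertices ab" "v \<in> vertices ab" for u v
  proof -
    obtain t t' where "t < Suc k" "t' < Suc k" "u = (a ! t, b ! t)" "v = (a ! t', b ! t')"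
      using uv a(1) b(1) by (force simp: vertices_def ab in_set_conv_nth)
    then show ?thesis using ordered by (metis nat_le_linear)
  qed
  have "vertices ab \<subseteq> {0..m} \<times> {0..n}"
    unfolding vertices_def ab using a b by (auto dest: set_zip_leftD set_zip_rightD)
  then show ?thesis
    using comparable by (simp add: grid_chain_def vertices_def[of ab])
qed

lemma vertices_act_prod:
  assumes "ab \<in> prism m n l" "mono_op k l \<theta>"
  shows "vertices (act_prod k \<theta> ab) \<subseteq> vertices ab"
proof
  obtain a b where ab: "ab = (a, b)" by (cases ab)
  have len: "length a = Suc l" "length b = Suc l"
    using assms(1) ab by (auto simp: prism_def length_simplex)
  fix z assume "z \<in> vertices (act_prod k \<theta> ab)"
  then obtain j where j: "j \<le> k" "z = (a ! \<theta> j, b ! \<theta> j)"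
    by (auto simp: vertices_def act_prod_def ab in_set_conv_nth less_Suc_eq_le)
  moreover have "\<theta> j < Suc l" using assms(2) j by (auto simp: mono_op_def less_Suc_eq_le)
  ultimately have "z = zip a b ! \<theta> j" "\<theta> j < length (zip a b)"
    using len by auto
  then show "z \<in> vertices ab"
    unfolding vertices_def ab fst_conv snd_conv by (metis nth_mem)
qed

lemma subcx_subprism:
  assumes "down_closed K"
  shows "subcx (subprism m n K) (prism m n) act_prod"
  unfolding subcx_def
proof (intro conjI allI impI)
  fix k l \<theta> x
  assume x: "mono_op k l \<theta> \<and> x \<in> subprism m n K l"
  then have "act_prod k \<theta> x \<in> prism m n k"
    by (cases x) (simp add: subprism_def prism_def act_prod_def; blast intro: act_list_simplex)
  moreover have "vertices (act_prod k \<theta> x) \<in> K"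
  proof -
    have "x \<in> prism m n l" "vertices x \<in> K" using x by (auto simp: subprism_def)
    then show ?thesis
      using x vertices_act_prod[of x m n l k \<theta>] assms unfolding down_closed_def by blast
  qed
  ultimately show "act_prod k \<theta> x \<in> subprism m n K k" by (simp add: subprism_def)
qed (auto simp: subprism_def)

lemma subprism_mono: "K \<subseteq> K' \<Longrightarrow> subprism m n K k \<subseteq> subprism m n K' k"
  by (auto simp: subprism_def)

definition chain_simplex :: "(nat \<times> nat) list \<Rightarrow> nat list \<Rightarrow> nat list \<times> nat list" where
  "chain_simplex vs c = (map (\<lambda>t. fst (vs ! t)) c, map (\<lambda>t. snd (vs ! t)) c)"

locale chain_enumeration =
  fixes m n p :: nat and vs :: "(nat \<times> nat) list"
  assumes distinct: "distinct vs" and length: "length vs = Suc p"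
    and in_grid: "set vs \<subseteq> {0..m} \<times> {0..n}"
    and monotone: "\<And>t t'. t \<le> t' \<Longrightarrow> t' < length vs \<Longrightarrow> grid_le (vs ! t) (vs ! t')"
begin

lemma vertices_chain_simplex: "vertices (chain_simplex vs c) = (\<lambda>t. vs ! t) ` set c"
proof -
  have "zip (map (\<lambda>t. fst (vs ! t)) c) (map (\<lambda>t. snd (vs ! t)) c) = map (\<lambda>t. vs ! t) c"
    by (induction c) auto
  then show ?thesis by (simp add: vertices_def chain_simplex_def)
qed

lemma vertex_index_bound: "c \<in> simplex p k \<Longrightarrow> t \<in> set c \<Longrightarrow> t < length vs"
  using length by (auto simp: simplex_def)

lemma chain_simplex_prism:
  assumes "c \<in> simplex p k"
  shows "chain_simplex vs c \<in> prism m n k"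
proof -
  have c: "length c = Suc k" "sorted c" using assms by (auto simp: simplex_def)
  have ordered: "grid_le (vs ! (c ! t)) (vs ! (c ! t'))" if "t \<le> t'" "t' < length c" for t t'
    using that c(2) vertex_index_bound[OF assms] by (intro monotone) (auto simp: sorted_nth_mono)
  have "vs ! t \<in> {0..m} \<times> {0..n}" if "t \<in> set c" for t
    using that vertex_index_bound[OF assms] in_grid nth_mem by blast
  then have "set (map (\<lambda>t. fst (vs ! t)) c) \<subseteq> {0..m}" "set (map (\<lambda>t. snd (vs ! t)) c) \<subseteq> {0..n}"
    by fastforce+
  moreover have "sorted (map (\<lambda>t. fst (vs ! t)) c)" "sorted (map (\<lambda>t. snd (vs ! t)) c)"
    using ordered by (auto simp: sorted_iff_nth_mono grid_le_def)
  ultimately show ?thesis using c(1) by (simp add: prism_def simplex_def chain_simplex_def)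
qed

lemma chain_simplex_act:
  assumes "c \<in> simplex p l" "mono_op k l \<theta>"
  shows "chain_simplex vs (act_list k \<theta> c) = act_prod k \<theta> (chain_simplex vs c)"
proof -
  have "length c = Suc l" using assms(1) by (simp add: simplex_def)
  moreover have "\<And>j. j \<le> k \<Longrightarrow> \<theta> j \<le> l" using assms(2) by (simp add: mono_op_def)
  ultimately show ?thesis
    unfolding chain_simplex_def act_prod_def act_list_def
    by (auto simp: less_Suc_eq_le simp del: upt_Suc)
qed

lemma inj_on_chain_simplex: "inj_on (chain_simplex vs) (simplex p k)"
proof
  fix c c'
  assume c: "c \<in> simplex p k" and c': "c' \<in> simplex p k"
    and eq: "chain_simplex vs c = chain_simplex vs c'"
  show "c = c'"
  proof (rule nth_equalityI)
    show len: "length c = length c'" using c c' by (simp add: length_simplex)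
    fix t assume t: "t < length c"
    have "fst (vs ! (c ! t)) = fst (vs ! (c' ! t))" "snd (vs ! (c ! t)) = snd (vs ! (c' ! t))"
      using eq t len unfolding chain_simplex_def by (metis nth_map prod.inject)+
    moreover have "c ! t < length vs" "c' ! t < length vs"
      using t len vertex_index_bound c c' nth_mem by metis+
    ultimately show "c ! t = c' ! t" using distinct nth_eq_iff_index_eq prod_eq_iff by metis
  qed
qed

lemma index_le_of_grid_le:
  assumes s: "s < length vs" "s' < length vs" and le: "grid_le (vs ! s) (vs ! s')"
  shows "s \<le> s'"
proof (rule ccontr)
  assume "\<not> s \<le> s'"
  then have "grid_le (vs ! s') (vs ! s)" using monotone s by simp
  then have "vs ! s = vs ! s'" using le by (simp add: grid_le_def prod_eq_iff)
  then show False using s distinct \<open>\<not> s \<le> s'\<close> nth_eq_iff_index_eq by fastforce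
qed

lemma chain_simplex_surj:
  assumes ab: "ab \<in> prism m n k" and sub: "vertices ab \<subseteq> set vs"
  obtains c where "c \<in> simplex p k" "chain_simplex vs c = ab"
proof -
  obtain a b where ab_eq: "ab = (a, b)" by (cases ab)
  have a: "length a = Suc k" "sorted a" and b: "length b = Suc k" "sorted b"
    using ab ab_eq by (auto simp: prism_def simplex_def)
  define z where "z = zip a b"
  have "set z \<subseteq> set vs" using sub by (simp add: z_def vertices_def ab_eq)
  moreover have "z ! t \<in> set z" if "t < Suc k" for t
    using that a(1) b(1) nth_mem[of t z] by (simp add: z_def del: nth_zip)
  ultimately have "z ! t \<in> set vs" if "t < Suc k" for t
    using that by blast
  then have "\<forall>t. \<exists>s. t < Suc k \<longrightarrow> s < length vs \<and> vs ! s = z ! t"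
    by (metis in_set_conv_nth)
  then obtain f where f: "\<And>t. t < Suc k \<Longrightarrow> f t < length vs \<and> vs ! f t = z ! t"
    by metis
  define c where "c = map f [0..<Suc k]"
  have "f t \<le> f t'" if "t \<le> t'" "t' < Suc k" for t t'
  proof (rule index_le_of_grid_le)
    show "grid_le (vs ! f t) (vs ! f t')"
      using that f a b by (simp add: z_def grid_le_def sorted_nth_mono)
  qed (use that f in auto)
  then have "sorted c" by (simp add: c_def sorted_iff_nth_mono del: upt_Suc)
  moreover have "set c \<subseteq> {0..p}"
    using f length by (auto simp: c_def less_Suc_eq_le simp del: upt_Suc)
  ultimately have "c \<in> simplex p k" by (simp add: simplex_def c_def)
  moreover have "map (\<lambda>t. vs ! t) c = z"
    using f a b by (intro nth_equalityI) (simp_all add: c_def z_def del: upt_Suc)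
  then have "map fst (map (\<lambda>t. vs ! t) c) = a" "map snd (map (\<lambda>t. vs ! t) c) = b"
    using a b by (simp_all add: z_def)
  then have "chain_simplex vs c = ab" by (simp add: chain_simplex_def ab_eq comp_def)
  ultimately show ?thesis by (rule that)
qed

lemma vertices_chain_simplex_horn:
  assumes "c \<in> horn p i k"
  obtains j where "j \<le> p" "j \<noteq> i" "vertices (chain_simplex vs c) \<subseteq> set vs - {vs ! j}"
proof -
  obtain j where j: "j \<le> p" "j \<noteq> i" "j \<notin> set c" and c: "c \<in> simplex p k"
    using assms by (auto simp: horn_def)
  have "vs ! t \<in> set vs - {vs ! j}" if "t \<in> set c" for t
  proof -
    have "t < length vs" "j < length vs" "t \<noteq> j"
      using that j vertex_index_bound[OF c] length by auto
    then show ?thesis by (simp add: nth_eq_iff_index_eq distinct)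
  qed
  then have "vertices (chain_simplex vs c) \<subseteq> set vs - {vs ! j}"
    by (simp add: vertices_chain_simplex image_subset_iff)
  then show ?thesis using that j(1,2) by blast
qed

lemma vertices_chain_simplex_not_horn:
  assumes "c \<in> simplex p k" "c \<notin> horn p i k"
  shows "set vs - {vs ! i} \<subseteq> vertices (chain_simplex vs c)"
proof
  fix u assume u: "u \<in> set vs - {vs ! i}"
  then obtain t where t: "t \<le> p" "vs ! t = u"
    using length by (metis DiffD1 in_set_conv_nth less_Suc_eq_le)
  then have "t \<in> set c" using u assms by (auto simp: horn_def)
  then show "u \<in> vertices (chain_simplex vs c)" using t(2) by (auto simp: vertices_chain_simplex)
qed

lemma smap_chain_simplex:
  assumes "\<And>k. X k \<subseteq> simplex p k" "\<And>k c. c \<in> X k \<Longrightarrow> chain_simplex vs c \<in> Y k"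
  shows "smap X act_list Y act_prod (chain_simplex vs)"
  using assms chain_simplex_act unfolding smap_def by blast

end

locale chain_attachment = chain_enumeration +
  fixes K :: "(nat \<times> nat) set set" and i :: nat
  assumes down_closed: "down_closed K" and vertex_le: "i \<le> p"
    and facets: "\<And>j. j \<le> p \<Longrightarrow> j \<noteq> i \<Longrightarrow> set vs - {vs ! j} \<in> K"
    and missing_facet: "set vs - {vs ! i} \<notin> K"
begin

lemma smap_simplex:
  "smap (simplex p) act_list (subprism m n (K \<union> Pow (set vs))) act_prod (chain_simplex vs)"
proof (rule smap_chain_simplex)
  fix k c assume c: "c \<in> simplex p k"
  then have "vertices (chain_simplex vs c) \<subseteq> set vs"
    using vertex_index_bound[OF c] by (auto simp: vertices_chain_simplex)
  then show "chain_simplex vs c \<in> subprism m n (K \<union> Pow (set vs)) k"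
    using chain_simplex_prism[OF c] by (simp add: subprism_def)
qed simp

lemma chain_simplex_horn: "c \<in> horn p i k \<Longrightarrow> chain_simplex vs c \<in> subprism m n K k"
proof -
  assume c: "c \<in> horn p i k"
  then obtain j where "j \<le> p" "j \<noteq> i" "vertices (chain_simplex vs c) \<subseteq> set vs - {vs ! j}"
    by (rule vertices_chain_simplex_horn)
  then have "vertices (chain_simplex vs c) \<in> K"
    using facets down_closed unfolding down_closed_def by blast
  moreover have "c \<in> simplex p k" using c by (simp add: horn_def)
  ultimately show ?thesis using chain_simplex_prism by (simp add: subprism_def)
qed

lemma smap_horn: "smap (horn p i) act_list (subprism m n K) act_prod (chain_simplex vs)"
  by (rule smap_chain_simplex) (auto simp: horn_def chain_simplex_horn)

lemma subprism_attach:
  "subprism m n (K \<union> Pow (set vs)) k = subprism m n K k \<union> chain_simplex vs ` simplex p k"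
proof
  show "subprism m n (K \<union> Pow (set vs)) k \<subseteq> subprism m n K k \<union> chain_simplex vs ` simplex p k"
  proof
    fix ab assume "ab \<in> subprism m n (K \<union> Pow (set vs)) k"
    then have ab: "ab \<in> prism m n k" and "vertices ab \<in> K \<or> vertices ab \<subseteq> set vs"
      by (auto simp: subprism_def)
    then show "ab \<in> subprism m n K k \<union> chain_simplex vs ` simplex p k"
      by (auto simp: subprism_def elim: chain_simplex_surj[OF ab])
  qed
  have "chain_simplex vs ` simplex p k \<subseteq> subprism m n (K \<union> Pow (set vs)) k"
    using smap_simplex unfolding smap_def by blast
  then show "subprism m n K k \<union> chain_simplex vs ` simplex p k \<subseteq> subprism m n (K \<union> Pow (set vs)) k"
    using subprism_mono[of K "K \<union> Pow (set vs)" m n k] by blast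
qed

lemma set_pushout:
  "set_pushout (horn p i k) (subprism m n K k) (simplex p k) (chain_simplex vs) id
     (subprism m n (K \<union> Pow (set vs)) k) id (chain_simplex vs)"
  unfolding subprism_attach
proof (rule set_pushout_attach)
  show "chain_simplex vs ` (simplex p k - horn p i k) \<inter> subprism m n K k = {}"
  proof (rule ccontr)
    assume "chain_simplex vs ` (simplex p k - horn p i k) \<inter> subprism m n K k \<noteq> {}"
    then obtain c where c: "c \<in> simplex p k" "c \<notin> horn p i k"
      and "chain_simplex vs c \<in> subprism m n K k"
      by blast
    then have "vertices (chain_simplex vs c) \<in> K" by (simp add: subprism_def)
    moreover have "set vs - {vs ! i} \<subseteq> vertices (chain_simplex vs c)"
      using c by (rule vertices_chain_simplex_not_horn)
    ultimately have "set vs - {vs ! i} \<in> K"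
      using down_closed unfolding down_closed_def by blast
    then show False using missing_facet by simp
  qed
  show "horn p i k \<subseteq> simplex p k" by (auto simp: horn_def)
  show "chain_simplex vs ` horn p i k \<subseteq> subprism m n K k"
    using chain_simplex_horn by blast
qed (simp_all add: inj_on_chain_simplex)

end

subsection \<open>Shellings\<close>

definition shelling_stage ::
    "(nat \<times> nat) set set \<Rightarrow> (nat \<times> nat) set list \<Rightarrow> nat \<Rightarrow> (nat \<times> nat) set set" where
  "shelling_stage K0 ts l = K0 \<union> (\<Union>j<l. Pow (ts ! j))"

definition shelling :: "nat \<Rightarrow> nat \<Rightarrow> nat \<Rightarrow> (nat \<times> nat) set set \<Rightarrow>
    (nat \<times> nat) set list \<Rightarrow> (nat \<times> nat) list \<Rightarrow> bool" where
  "shelling m n d K0 ts ws \<longleftrightarrow> down_closed K0 \<and> length ws = length ts \<and>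
     (\<forall>l<length ts. grid_chain m n (ts ! l) \<and> ws ! l \<in> ts ! l \<and> Suc d \<le> card (ts ! l) \<and>
        (\<forall>v\<in>ts ! l. v \<noteq> ws ! l \<longrightarrow> ts ! l - {v} \<in> shelling_stage K0 ts l) \<and>
        ts ! l - {ws ! l} \<notin> shelling_stage K0 ts l) \<and>
     (\<forall>l. Suc l < length ts \<longrightarrow> card (ts ! l) \<le> card (ts ! Suc l)) \<and>
     (\<forall>C. grid_chain m n C \<longrightarrow> C \<in> shelling_stage K0 ts (length ts))"

lemma shelling_stage_0 [simp]: "shelling_stage K0 ts 0 = K0"
  by (simp add: shelling_stage_def)

lemma shelling_stage_Suc: "shelling_stage K0 ts (Suc l) = shelling_stage K0 ts l \<union> Pow (ts ! l)"
  by (auto simp: shelling_stage_def lessThan_Suc)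

lemma shelling_stage_mono: "l \<le> l' \<Longrightarrow> shelling_stage K0 ts l \<subseteq> shelling_stage K0 ts l'"
  by (auto simp: shelling_stage_def)

lemma down_closed_shelling_stage: "down_closed K0 \<Longrightarrow> down_closed (shelling_stage K0 ts l)"
  unfolding down_closed_def shelling_stage_def by blast

lemma chain_attachment_shelling:
  assumes sh: "shelling m n d K0 ts ws" and l: "l < length ts"
    and vs: "distinct vs" "set vs = ts ! l"
      "\<And>t t'. t \<le> t' \<Longrightarrow> t' < length vs \<Longrightarrow> grid_le (vs ! t) (vs ! t')"
    and i: "i < length vs" "vs ! i = ws ! l"
  shows "chain_attachment m n (card (ts ! l) - 1) vs (shelling_stage K0 ts l) i"
proof -
  have "length vs = card (ts ! l)" using vs(1,2) distinct_card by metis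
  moreover have "Suc d \<le> card (ts ! l)" using sh l by (simp add: shelling_def)
  ultimately have len: "length vs = Suc (card (ts ! l) - 1)" by simp
  have "grid_chain m n (ts ! l)" using sh l by (simp add: shelling_def)
  then have grid: "set vs \<subseteq> {0..m} \<times> {0..n}" using vs(2) by (simp add: grid_chain_def)
  show ?thesis
  proof (unfold_locales)
    fix j assume j: "j \<le> card (ts ! l) - 1" "j \<noteq> i"
    then have "vs ! j \<in> ts ! l" "vs ! j \<noteq> ws ! l"
      using len vs(1,2) i nth_mem nth_eq_iff_index_eq by (metis le_imp_less_Suc)+
    then show "set vs - {vs ! j} \<in> shelling_stage K0 ts l"
      using sh l vs(2) by (simp add: shelling_def)
  qed (use sh l len grid vs i in \<open>simp_all add: shelling_def down_closed_shelling_stage\<close>)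
qed

lemma shelling_attachments:
  assumes sh: "shelling m n d K0 ts ws"
  obtains vsf ii where "\<And>l. l < length ts \<Longrightarrow> set (vsf l) = ts ! l"
    "\<And>l. l < length ts \<Longrightarrow>
       chain_attachment m n (card (ts ! l) - 1) (vsf l) (shelling_stage K0 ts l) (ii l)"
proof -
  have "\<forall>l. \<exists>vs. l < length ts \<longrightarrow> distinct vs \<and> set vs = ts ! l \<and>
      (\<forall>t t'. t \<le> t' \<longrightarrow> t' < length vs \<longrightarrow> grid_le (vs ! t) (vs ! t'))"
    using sh grid_chain_enumeration unfolding shelling_def by metis
  then obtain vsf where vsf: "\<And>l. l < length ts \<Longrightarrow> distinct (vsf l) \<and> set (vsf l) = ts ! l \<and>
      (\<forall>t t'. t \<le> t' \<longrightarrow> t' < length (vsf l) \<longrightarrow> grid_le (vsf l ! t) (vsf l ! t'))"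
    by metis
  have "\<forall>l. \<exists>i. l < length ts \<longrightarrow> i < length (vsf l) \<and> vsf l ! i = ws ! l"
    using sh vsf unfolding shelling_def by (metis in_set_conv_nth)
  then obtain ii where ii: "\<And>l. l < length ts \<Longrightarrow> ii l < length (vsf l) \<and> vsf l ! ii l = ws ! l"
    by metis
  have "chain_attachment m n (card (ts ! l) - 1) (vsf l) (shelling_stage K0 ts l) (ii l)"
    if "l < length ts" for l
    using chain_attachment_shelling[OF sh that] vsf[OF that] ii[OF that] by blast
  with vsf show ?thesis using that by blast
qed

theorem expansion_of_shelling:
  assumes sh: "shelling m n d K0 ts ws"
  shows "expansion d (subprism m n K0) (prism m n) act_prod"
proof -
  obtain vsf ii where set_vsf: "\<And>l. l < length ts \<Longrightarrow> set (vsf l) = ts ! l"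
    and attach: "\<And>l. l < length ts \<Longrightarrow>
       chain_attachment m n (card (ts ! l) - 1) (vsf l) (shelling_stage K0 ts l) (ii l)"
    using shelling_attachments[OF sh] by blast
  define nn where "nn l = card (ts ! l) - 1" for l
  define F where "F l = subprism m n (shelling_stage K0 ts l)" for l
  have F_Suc: "F (Suc l) = subprism m n (shelling_stage K0 ts l \<union> Pow (set (vsf l)))"
    if "l < length ts" for l
    using set_vsf[OF that] by (simp add: F_def shelling_stage_Suc)
  have cover: "prism m n k = (\<Union>l\<in>{l. enat l \<le> enat (length ts)}. F l k)" for k
    using sh grid_chain_vertices by (fastforce simp: F_def subprism_def shelling_def)
  have step: "d \<le> nn l \<and> ii l \<le> nn l \<and> (\<forall>k. F l k \<subseteq> F (Suc l) k) \<and>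
      smap (simplex (nn l)) act_list (F (Suc l)) act_prod (chain_simplex (vsf l)) \<and>
      smap (horn (nn l) (ii l)) act_list (F l) act_prod (chain_simplex (vsf l)) \<and>
      (\<forall>k. set_pushout (horn (nn l) (ii l) k) (F l k) (simplex (nn l) k) (chain_simplex (vsf l)) id
         (F (Suc l) k) id (chain_simplex (vsf l)))" if l: "l < length ts" for l
  proof -
    interpret chain_attachment m n "nn l" "vsf l" "shelling_stage K0 ts l" "ii l"
      using attach[OF l] unfolding nn_def .
    have "d \<le> nn l" using sh l by (fastforce simp: nn_def shelling_def)
    then show ?thesis
      unfolding F_Suc[OF l] using vertex_le smap_simplex smap_horn set_pushout
      by (simp add: F_def subprism_mono)
  qed
  have "nn l \<le> nn (Suc l)" if "Suc l < length ts" for l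
    using sh that by (simp add: nn_def shelling_def diff_le_mono)
  then show ?thesis
    unfolding expansion_def
    using is_sset_prism subcx_subprism sh cover step
    by (intro conjI exI[of _ "enat (length ts)"] exI[of _ F] exI[of _ nn] exI[of _ ii]
        exI[of _ "\<lambda>l. chain_simplex (vsf l)"])
      (auto simp: F_def shelling_def down_closed_shelling_stage)
qed

subsection \<open>Transposing the grid\<close>

definition swap_chain :: "(nat \<times> nat) set \<Rightarrow> (nat \<times> nat) set" where
  "swap_chain C = prod.swap ` C"

lemma swap_chain_swap_chain [simp]: "swap_chain (swap_chain C) = C"
  by (simp add: swap_chain_def image_image)

lemma swap_chain_subset_iff [simp]: "swap_chain A \<subseteq> swap_chain B \<longleftrightarrow> A \<subseteq> B"
  by (auto simp: swap_chain_def)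

lemma mem_swap_chain: "v \<in> swap_chain A \<longleftrightarrow> prod.swap v \<in> A"
  unfolding swap_chain_def by (metis image_iff swap_swap)

lemma swap_chain_Diff: "swap_chain A - {v} = swap_chain (A - {prod.swap v})"
  by (auto simp: swap_chain_def)

lemma card_swap_chain [simp]: "card (swap_chain A) = card A"
  unfolding swap_chain_def by (rule card_image) (simp add: inj_on_def, metis swap_swap)

lemma mem_image_swap_chain: "U \<in> swap_chain ` K \<longleftrightarrow> swap_chain U \<in> K"
  by (metis image_eqI imageE swap_chain_swap_chain)

lemma grid_chain_swap_chain: "grid_chain n m C \<Longrightarrow> grid_chain m n (swap_chain C)"
  unfolding grid_chain_def swap_chain_def grid_le_def by auto

lemma down_closed_image_swap_chain:
  assumes "down_closed K"
  shows "down_closed (swap_chain ` K)"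
  unfolding down_closed_def
proof (intro ballI allI impI)
  fix A B assume "A \<in> swap_chain ` K" "B \<subseteq> A"
  then have "swap_chain B \<subseteq> swap_chain A" "swap_chain A \<in> K"
    by (simp_all add: mem_image_swap_chain)
  then show "B \<in> swap_chain ` K"
    using assms unfolding down_closed_def mem_image_swap_chain by blast
qed

lemma shelling_stage_swap_chain:
  assumes "l \<le> length ts"
  shows "shelling_stage (swap_chain ` K0) (map swap_chain ts) l = swap_chain ` shelling_stage K0 ts l"
proof -
  have "U \<subseteq> map swap_chain ts ! j \<longleftrightarrow> swap_chain U \<subseteq> ts ! j" if "j < l" for U j
    using that assms swap_chain_subset_iff[of U "swap_chain (ts ! j)"] by simp
  then show ?thesis
    unfolding set_eq_iff mem_image_swap_chain[where K = "shelling_stage K0 ts l"]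
    by (auto simp: shelling_stage_def mem_image_swap_chain)
qed

lemma shelling_swap_chain:
  assumes "shelling n m d K0 ts ws"
  shows "shelling m n d (swap_chain ` K0) (map swap_chain ts) (map prod.swap ws)"
  unfolding shelling_def
proof (intro conjI allI impI ballI)
  show "down_closed (swap_chain ` K0)"
    using assms by (simp add: shelling_def down_closed_image_swap_chain)
  show "length (map prod.swap ws) = length (map swap_chain ts)"
    using assms by (simp add: shelling_def)
next
  fix l assume "l < length (map swap_chain ts)"
  then have l: "l < length ts" by simp
  have ws: "map prod.swap ws ! l = prod.swap (ws ! l)" using l assms by (simp add: shelling_def)
  note stage = shelling_stage_swap_chain[of l ts K0] mem_image_swap_chain
  note facts = assms[unfolded shelling_def, THEN conjunct2, THEN conjunct2, THEN conjunct1,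
      rule_format, OF l]
  show "grid_chain m n (map swap_chain ts ! l)" "Suc d \<le> card (map swap_chain ts ! l)"
    "map prod.swap ws ! l \<in> map swap_chain ts ! l"
    using facts l ws by (simp_all add: grid_chain_swap_chain mem_swap_chain)
  show "map swap_chain ts ! l - {map prod.swap ws ! l}
      \<notin> shelling_stage (swap_chain ` K0) (map swap_chain ts) l"
    using facts l ws by (simp add: stage swap_chain_Diff)
  fix v assume "v \<in> map swap_chain ts ! l" "v \<noteq> map prod.swap ws ! l"
  then have "prod.swap v \<in> ts ! l" "prod.swap v \<noteq> ws ! l"
    using l ws by (simp add: mem_swap_chain, metis swap_swap)
  then show "map swap_chain ts ! l - {v} \<in> shelling_stage (swap_chain ` K0) (map swap_chain ts) l"
    using facts l by (simp add: stage swap_chain_Diff)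
next
  fix l assume "Suc l < length (map swap_chain ts)"
  then show "card (map swap_chain ts ! l) \<le> card (map swap_chain ts ! Suc l)"
    using assms by (simp add: shelling_def)
next
  fix C assume "grid_chain m n C"
  then have "swap_chain C \<in> shelling_stage K0 ts (length ts)"
    using assms grid_chain_swap_chain[of m n C] by (simp add: shelling_def)
  then show "C \<in> shelling_stage (swap_chain ` K0) (map swap_chain ts) (length (map swap_chain ts))"
    by (simp add: shelling_stage_swap_chain mem_image_swap_chain)
qed

definition covers :: "nat \<Rightarrow> nat \<Rightarrow> nat \<Rightarrow> (nat \<times> nat) set \<Rightarrow> bool" where
  "covers m n i C \<longleftrightarrow> (\<forall>j\<le>m. j \<noteq> i \<longrightarrow> j \<in> fst ` C) \<and> (\<forall>j\<le>n. j \<in> snd ` C)"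

definition horn_chains :: "nat \<Rightarrow> nat \<Rightarrow> nat \<Rightarrow> (nat \<times> nat) set set" where
  "horn_chains m n i = {C. \<not> covers m n i C}"

lemma covers_mono: "covers m n i A \<Longrightarrow> A \<subseteq> B \<Longrightarrow> covers m n i B"
  unfolding covers_def by (meson image_mono subsetD)

lemma down_closed_horn_chains: "down_closed (horn_chains m n i)"
  unfolding down_closed_def horn_chains_def using covers_mono by blast

lemma horn_prism1_eq_subprism: "horn_prism1 m n i = subprism m n (horn_chains m n i)"
proof (intro ext set_eqI)
  fix k and ab :: "nat list \<times> nat list"
  obtain a b where ab: "ab = (a, b)" by (cases ab)
  show "ab \<in> horn_prism1 m n i k \<longleftrightarrow> ab \<in> subprism m n (horn_chains m n i) k"
  proof (cases "ab \<in> prism m n k")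
    case True
    then have a: "a \<in> simplex m k" and b: "b \<in> simplex n k" by (auto simp: prism_def ab)
    then have len: "length a = length b" by (simp add: length_simplex)
    have "ab \<in> horn_prism1 m n i k \<longleftrightarrow> (\<exists>j\<le>m. j \<noteq> i \<and> j \<notin> set a) \<or> (\<exists>j\<le>n. j \<notin> set b)"
      using a b by (auto simp: horn_prism1_def horn_def bdry_def ab)
    also have "\<dots> \<longleftrightarrow> \<not> covers m n i (vertices ab)"
      unfolding covers_def ab fst_vertices[OF len] snd_vertices[OF len] by blast
    finally show ?thesis using True by (simp add: subprism_def horn_chains_def)
  qed (auto simp: horn_prism1_def subprism_def prism_def horn_def bdry_def ab)
qed

lemma horn_prism2_eq_subprism:
  "horn_prism2 m n j = subprism m n (swap_chain ` horn_chains n m j)"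
proof (intro ext set_eqI)
  fix k and ab :: "nat list \<times> nat list"
  obtain a b where ab: "ab = (a, b)" by (cases ab)
  have fst_swap: "fst ` swap_chain Z = snd ` Z" and snd_swap: "snd ` swap_chain Z = fst ` Z"
    for Z by (force simp: swap_chain_def)+
  show "ab \<in> horn_prism2 m n j k \<longleftrightarrow> ab \<in> subprism m n (swap_chain ` horn_chains n m j) k"
  proof (cases "ab \<in> prism m n k")
    case True
    then have a: "a \<in> simplex m k" and b: "b \<in> simplex n k" by (auto simp: prism_def ab)
    then have len: "length a = length b" by (simp add: length_simplex)
    have "ab \<in> horn_prism2 m n j k \<longleftrightarrow> (\<exists>x\<le>m. x \<notin> set a) \<or> (\<exists>y\<le>n. y \<noteq> j \<and> y \<notin> set b)"
      using a b by (auto simp: horn_prism2_def horn_def bdry_def ab)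
    also have "\<dots> \<longleftrightarrow> \<not> covers n m j (swap_chain (vertices ab))"
      unfolding covers_def ab fst_swap snd_swap fst_vertices[OF len] snd_vertices[OF len] by blast
    finally show ?thesis
      using True by (simp add: subprism_def horn_chains_def mem_image_swap_chain)
  qed (auto simp: horn_prism2_def subprism_def prism_def horn_def bdry_def ab)
qed

subsection \<open>A shelling of the prism relative to the horn prism\<close>

definition column :: "nat \<Rightarrow> (nat \<times> nat) set \<Rightarrow> nat set" where
  "column c C = {b. (c, b) \<in> C}"

definition neighbour_column :: "nat \<Rightarrow> nat" where
  "neighbour_column i = (if 0 < i then i - 1 else 1)"

definition apex_row :: "nat \<Rightarrow> (nat \<times> nat) set \<Rightarrow> nat" where
  "apex_row i C = (if 0 < i then Max (column (neighbour_column i) C)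
                   else Min (column (neighbour_column i) C))"

definition apex :: "nat \<Rightarrow> (nat \<times> nat) set \<Rightarrow> nat \<times> nat" where
  "apex i C = (i, apex_row i C)"

definition spanning :: "nat \<Rightarrow> nat \<Rightarrow> nat \<Rightarrow> (nat \<times> nat) set \<Rightarrow> bool" where
  "spanning m n i C \<longleftrightarrow> grid_chain m n C \<and> covers m n i C"

definition shelling_chains :: "nat \<Rightarrow> nat \<Rightarrow> nat \<Rightarrow> (nat \<times> nat) set set" where
  "shelling_chains m n i = {C. spanning m n i C \<and> apex i C \<in> C}"

text \<open>
Lexicographic in (size, apex row), the row increasing for \<open>i > 0\<close> and decreasing for \<open>i = 0\<close>;
the second summand never exceeds n.
\<close>

definition shelling_key :: "nat \<Rightarrow> nat \<Rightarrow> (nat \<times> nat) set \<Rightarrow> nat" where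
  "shelling_key n i C = card C * Suc n + (if 0 < i then apex_row i C else n - apex_row i C)"

lemma finite_column: "finite C \<Longrightarrow> finite (column c C)"
  by (rule finite_subset[of _ "snd ` C"]) (force simp: column_def)+

lemma neighbour_column_0 [simp]: "neighbour_column 0 = 1"
  by (simp add: neighbour_column_def)

lemma column_insert: "fst u \<noteq> c \<Longrightarrow> column c (insert u C) = column c C"
  by (cases u) (auto simp: column_def)

lemma column_Diff: "fst u \<noteq> c \<Longrightarrow> column c (C - {u}) = column c C"
  by (cases u) (auto simp: column_def)

lemma column_mono: "A \<subseteq> B \<Longrightarrow> column c A \<subseteq> column c B"
  by (auto simp: column_def)

locale prism_horn =
  fixes m n i :: nat
  assumes m_pos: "1 \<le> m" and i_le: "i \<le> m"
begin

lemma neighbour_column: "neighbour_column i \<le> m" "neighbour_column i \<noteq> i"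
  using m_pos i_le by (auto simp: neighbour_column_def)

lemma apex_insert:
  assumes "fst u \<noteq> neighbour_column i"
  shows "apex i (insert u C) = apex i C"
  unfolding apex_def apex_row_def column_insert[OF assms] by (rule refl)

lemma apex_Diff:
  assumes "fst u \<noteq> neighbour_column i"
  shows "apex i (C - {u}) = apex i C"
  unfolding apex_def apex_row_def column_Diff[OF assms] by (rule refl)

lemma fst_apex_ne: "fst (apex i C) \<noteq> neighbour_column i"
  using neighbour_column by (simp add: apex_def)

lemma spanning_finite: "spanning m n i C \<Longrightarrow> finite (column c C)"
  by (simp add: spanning_def grid_chain_def finite_column)

lemma apex_row_in_column:
  assumes "spanning m n i C"
  shows "(neighbour_column i, apex_row i C) \<in> C"
proof -
  define X where "X = column (neighbour_column i) C"
  have "neighbour_column i \<in> fst ` C"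
    using assms neighbour_column by (auto simp: spanning_def covers_def)
  then have "X \<noteq> {}" by (force simp: X_def column_def)
  then have "Max X \<in> X" "Min X \<in> X" using spanning_finite[OF assms] by (simp_all add: X_def)
  then have "apex_row i C \<in> X" unfolding apex_row_def X_def[symmetric] by simp
  then show ?thesis by (simp add: X_def column_def)
qed

lemma apex_row_extremal:
  assumes "spanning m n i C" "(neighbour_column i, b) \<in> C"
  shows "(0 < i \<longrightarrow> b \<le> apex_row i C) \<and> (i = 0 \<longrightarrow> apex_row i C \<le> b)"
  using assms spanning_finite[OF assms(1)] by (auto simp: apex_row_def column_def)

lemma apex_row_le: "spanning m n i C \<Longrightarrow> apex_row i C \<le> n"
  using apex_row_in_column by (force simp: spanning_def grid_chain_def)

lemma apex_comparable:
  assumes "spanning m n i C" "u \<in> C"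
  shows "grid_le u (apex i C) \<or> grid_le (apex i C) u"
proof -
  let ?c = "neighbour_column i" and ?b = "apex_row i C"
  have "grid_le u (?c, ?b) \<or> grid_le (?c, ?b) u"
    using assms apex_row_in_column[OF assms(1)] by (simp add: spanning_def grid_chain_def)
  moreover have "fst u = ?c \<longrightarrow> (0 < i \<longrightarrow> snd u \<le> ?b) \<and> (i = 0 \<longrightarrow> ?b \<le> snd u)"
    using apex_row_extremal[OF assms(1), of "snd u"] assms(2) by (metis prod.collapse)
  ultimately show ?thesis
    by (cases u) (auto simp: grid_le_def apex_def neighbour_column_def split: if_splits)
qed

lemma spanning_insert_apex: "spanning m n i C \<Longrightarrow> spanning m n i (insert (apex i C) C)"
  using apex_row_le i_le apex_comparable
  by (auto simp: spanning_def apex_def intro!: grid_chain_insert elim: covers_mono)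

lemma spanning_Diff_apex:
  assumes "spanning m n i C"
  shows "spanning m n i (C - {apex i C})"
proof -
  have cv: "covers m n i C" using assms by (simp add: spanning_def)
  have row: "(neighbour_column i, apex_row i C) \<in> C - {apex i C}"
    using apex_row_in_column[OF assms] neighbour_column by (auto simp: apex_def)
  have "covers m n i (C - {apex i C})"
    unfolding covers_def
  proof (intro conjI allI impI)
    fix j assume j: "j \<le> m" "j \<noteq> i"
    then obtain u where u: "u \<in> C" "fst u = j" using cv unfolding covers_def by force
    then have "u \<noteq> apex i C" using j by (auto simp: apex_def)
    then show "j \<in> fst ` (C - {apex i C})" using u by force
  next
    fix j assume "j \<le> n"
    then obtain u where u: "u \<in> C" "snd u = j" using cv unfolding covers_def by force
    show "j \<in> snd ` (C - {apex i C})"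
    proof (cases "u = apex i C")
      case True
      then have "j = snd (neighbour_column i, apex_row i C)" using u by (simp add: apex_def)
      then show ?thesis using row by blast
    next
      case False
      then show ?thesis using u by force
    qed
  qed
  then show ?thesis
    using assms grid_chain_subset[of m n C "C - {apex i C}"] by (simp add: spanning_def)
qed

lemma shelling_key_less_card:
  assumes "spanning m n i A" "card A < card B"
  shows "shelling_key n i A < shelling_key n i B"
proof -
  have "shelling_key n i A < Suc (card A) * Suc n"
    using apex_row_le[OF assms(1)] by (auto simp: shelling_key_def)
  also have "\<dots> \<le> card B * Suc n" using assms(2) by (intro mult_le_mono1) simp
  also have "\<dots> \<le> shelling_key n i B" by (simp add: shelling_key_def)
  finally show ?thesis .
qed

lemma shelling_key_less_column:
  assumes "spanning m n i A" "spanning m n i B" "card A = card B"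
    and "column (neighbour_column i) A \<subseteq> column (neighbour_column i) B"
    and "apex_row i A \<noteq> apex_row i B"
  shows "shelling_key n i A < shelling_key n i B"
proof -
  define X where "X = column (neighbour_column i) A"
  define Y where "Y = column (neighbour_column i) B"
  have ne: "X \<noteq> {}" using apex_row_in_column[OF assms(1)] by (auto simp: X_def column_def)
  have sub: "X \<subseteq> Y" and fin: "finite Y"
    using assms(4) spanning_finite[OF assms(2)] by (simp_all add: X_def Y_def)
  have "Max X \<le> Max Y" "Min Y \<le> Min X"
    using Max_mono[OF sub ne fin] Min_antimono[OF sub ne fin] by simp_all
  then have "0 < i \<Longrightarrow> apex_row i A \<le> apex_row i B" "i = 0 \<Longrightarrow> apex_row i B \<le> apex_row i A"
    unfolding apex_row_def X_def[symmetric] Y_def[symmetric] by simp_all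
  then show ?thesis
    using assms(3,5) apex_row_le[OF assms(1)] apex_row_le[OF assms(2)]
    by (cases "0 < i") (simp_all add: shelling_key_def)
qed

lemma shelling_chains_facet:
  assumes \<tau>: "\<tau> \<in> shelling_chains m n i" and v: "v \<in> \<tau>" "v \<noteq> apex i \<tau>"
    and cv: "covers m n i (\<tau> - {v})"
  shows "\<exists>\<tau>'\<in>shelling_chains m n i. \<tau> - {v} \<subseteq> \<tau>' \<and> shelling_key n i \<tau>' < shelling_key n i \<tau>"
proof -
  have span: "spanning m n i \<tau>" and apex: "apex i \<tau> \<in> \<tau>" using \<tau> by (auto simp: shelling_chains_def)
  have fin: "finite \<tau>" using span by (simp add: spanning_def grid_chain_def)
  define \<sigma> where "\<sigma> = \<tau> - {v}"
  have span_\<sigma>: "spanning m n i \<sigma>"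
    using span cv grid_chain_subset unfolding spanning_def \<sigma>_def by blast
  show ?thesis
  proof (cases "apex i \<sigma> \<in> \<sigma>")
    case True
    then have "\<sigma> \<in> shelling_chains m n i" using span_\<sigma> by (simp add: shelling_chains_def)
    moreover have "card \<sigma> < card \<tau>" using fin v unfolding \<sigma>_def by (meson card_Diff1_less)
    ultimately show ?thesis using shelling_key_less_card span_\<sigma> unfolding \<sigma>_def by blast
  next
    case False
    define \<tau>' where "\<tau>' = insert (apex i \<sigma>) \<sigma>"
    have apex': "apex i \<tau>' = apex i \<sigma>" unfolding \<tau>'_def by (rule apex_insert, rule fst_apex_ne)
    have span': "spanning m n i \<tau>'" using spanning_insert_apex[OF span_\<sigma>] by (simp add: \<tau>'_def)
    then have "\<tau>' \<in> shelling_chains m n i" using apex' by (simp add: shelling_chains_def \<tau>'_def)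
    moreover have "shelling_key n i \<tau>' < shelling_key n i \<tau>"
    proof (rule shelling_key_less_column[OF span' span])
      have "0 < card \<tau>" using fin v by (auto simp: card_gt_0_iff)
      then show "card \<tau>' = card \<tau>" using False fin v by (simp add: \<tau>'_def \<sigma>_def)
      show "column (neighbour_column i) \<tau>' \<subseteq> column (neighbour_column i) \<tau>"
        unfolding \<tau>'_def column_insert[OF fst_apex_ne] \<sigma>_def by (rule column_mono) blast
      show "apex_row i \<tau>' \<noteq> apex_row i \<tau>"
        using False apex v apex' by (auto simp: \<sigma>_def apex_def)
    qed
    moreover have "\<tau> - {v} \<subseteq> \<tau>'" unfolding \<tau>'_def \<sigma>_def by blast
    ultimately show ?thesis by blast
  qed
qed

lemma shelling_chains_apex_facet:
  assumes \<tau>: "\<tau> \<in> shelling_chains m n i" and \<tau>': "\<tau>' \<in> shelling_chains m n i"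
    and sub: "\<tau> - {apex i \<tau>} \<subseteq> \<tau>'" and ne: "\<tau>' \<noteq> \<tau>"
  shows "shelling_key n i \<tau> < shelling_key n i \<tau>'"
proof -
  have span: "spanning m n i \<tau>" and apex: "apex i \<tau> \<in> \<tau>" using \<tau> by (auto simp: shelling_chains_def)
  have span': "spanning m n i \<tau>'" and apex': "apex i \<tau>' \<in> \<tau>'" using \<tau>' by (auto simp: shelling_chains_def)
  have fin: "finite \<tau>" "finite \<tau>'" using span span' by (simp_all add: spanning_def grid_chain_def)
  have "\<tau>' \<noteq> \<tau> - {apex i \<tau>}"
    using apex' apex_Diff[OF fst_apex_ne, of \<tau> \<tau>] by auto
  then have "card (\<tau> - {apex i \<tau>}) < card \<tau>'"
    using sub fin(2) by (simp add: psubset_card_mono psubsetI)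
  then consider "card \<tau> < card \<tau>'" | "card \<tau> = card \<tau>'"
    using apex fin(1) by (simp add: card_Diff1_less_iff) linarith
  then show ?thesis
  proof cases
    case 1
    then show ?thesis using shelling_key_less_card span by blast
  next
    case 2
    have "apex i \<tau> \<notin> \<tau>'"
    proof
      assume "apex i \<tau> \<in> \<tau>'"
      then have "\<tau> \<subseteq> \<tau>'" using sub by blast
      then show False using 2 fin(2) card_subset_eq ne by blast
    qed
    show ?thesis
    proof (rule shelling_key_less_column[OF span span' 2])
      show "column (neighbour_column i) \<tau> \<subseteq> column (neighbour_column i) \<tau>'"
        using column_mono[OF sub] column_Diff[OF fst_apex_ne] by metis
      show "apex_row i \<tau> \<noteq> apex_row i \<tau>'"
        using \<open>apex i \<tau> \<notin> \<tau>'\<close> apex' by (auto simp: apex_def)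
    qed
  qed
qed

lemma card_shelling_chains: "\<tau> \<in> shelling_chains m n i \<Longrightarrow> Suc m \<le> card \<tau>"
proof -
  assume \<tau>: "\<tau> \<in> shelling_chains m n i"
  then have fin: "finite \<tau>" by (simp add: shelling_chains_def spanning_def grid_chain_def)
  have "{0..m} \<subseteq> fst ` \<tau>"
    using \<tau> by (force simp: shelling_chains_def spanning_def covers_def apex_def)
  then have "card {0..m} \<le> card (fst ` \<tau>)" using card_mono[OF finite_imageI[OF fin]] by blast
  also have "\<dots> \<le> card \<tau>" using fin by (rule card_image_le)
  finally show ?thesis by simp
qed

lemma finite_shelling_chains: "finite (shelling_chains m n i)"
  by (rule finite_subset[of _ "Pow ({0..m} \<times> {0..n})"])
    (auto simp: shelling_chains_def spanning_def grid_chain_def)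

end

definition (in prism_horn) shelling_list :: "(nat \<times> nat) set list" where
  "shelling_list = sort_key (shelling_key n i) (SOME xs. distinct xs \<and> set xs = shelling_chains m n i)"

context prism_horn
begin

lemma shelling_list:
  "distinct shelling_list" "set shelling_list = shelling_chains m n i"
  "sorted (map (shelling_key n i) shelling_list)"
proof -
  define xs where "xs = (SOME xs. distinct xs \<and> set xs = shelling_chains m n i)"
  have "distinct xs \<and> set xs = shelling_chains m n i"
    unfolding xs_def by (rule someI_ex) (use finite_distinct_list[OF finite_shelling_chains] in blast)
  then show "distinct shelling_list" "set shelling_list = shelling_chains m n i"
    "sorted (map (shelling_key n i) shelling_list)"
    by (simp_all add: shelling_list_def xs_def[symmetric])
qed

lemma shelling_list_nth: "l < length shelling_list \<Longrightarrow> shelling_list ! l \<in> shelling_chains m n i"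
  using shelling_list(2) nth_mem by blast

lemma shelling_key_mono:
  "j \<le> l \<Longrightarrow> l < length shelling_list \<Longrightarrow>
     shelling_key n i (shelling_list ! j) \<le> shelling_key n i (shelling_list ! l)"
  using sorted_nth_mono[OF shelling_list(3), of j l] by simp

lemma facet_in_shelling_stage:
  assumes l: "l < length shelling_list"
    and v: "v \<in> shelling_list ! l" "v \<noteq> apex i (shelling_list ! l)"
  shows "shelling_list ! l - {v} \<in> shelling_stage (horn_chains m n i) shelling_list l"
proof (cases "covers m n i (shelling_list ! l - {v})")
  case True
  then obtain \<tau> where \<tau>: "\<tau> \<in> shelling_chains m n i" "shelling_list ! l - {v} \<subseteq> \<tau>"
    and key: "shelling_key n i \<tau> < shelling_key n i (shelling_list ! l)"
    using shelling_chains_facet[OF shelling_list_nth[OF l] v] by blast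
  obtain j where j: "j < length shelling_list" "shelling_list ! j = \<tau>"
    using \<tau>(1) shelling_list(2) by (metis in_set_conv_nth)
  have "\<not> l \<le> j" using shelling_key_mono[of l j] j key by auto
  then have "j < l" by simp
  then show ?thesis using \<tau>(2) j(2) by (auto simp: shelling_stage_def)
qed (simp add: shelling_stage_def horn_chains_def)

lemma apex_facet_not_in_shelling_stage:
  assumes l: "l < length shelling_list"
  shows "shelling_list ! l - {apex i (shelling_list ! l)}
    \<notin> shelling_stage (horn_chains m n i) shelling_list l"
proof
  let ?\<tau> = "shelling_list ! l"
  assume "?\<tau> - {apex i ?\<tau>} \<in> shelling_stage (horn_chains m n i) shelling_list l"
  then consider "?\<tau> - {apex i ?\<tau>} \<in> horn_chains m n i"
    | j where "j < l" "?\<tau> - {apex i ?\<tau>} \<subseteq> shelling_list ! j"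
    by (auto simp: shelling_stage_def)
  then show False
  proof cases
    case 1
    then show False
      using spanning_Diff_apex shelling_list_nth[OF l]
      by (simp add: horn_chains_def shelling_chains_def spanning_def)
  next
    case (2 j)
    then have "shelling_list ! j \<noteq> ?\<tau>"
      using l shelling_list(1) nth_eq_iff_index_eq by fastforce
    then have "shelling_key n i ?\<tau> < shelling_key n i (shelling_list ! j)"
      using shelling_chains_apex_facet shelling_list_nth l 2 by simp
    then show False using shelling_key_mono[of j l] 2 l by simp
  qed
qed

lemma grid_chain_in_final_shelling_stage:
  assumes "grid_chain m n C"
  shows "C \<in> shelling_stage (horn_chains m n i) shelling_list (length shelling_list)"
proof (cases "covers m n i C")
  case True
  then have "insert (apex i C) C \<in> shelling_chains m n i"
    using assms spanning_insert_apex apex_insert[OF fst_apex_ne]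
    by (simp add: shelling_chains_def spanning_def)
  then obtain j where "j < length shelling_list" "shelling_list ! j = insert (apex i C) C"
    using shelling_list(2) by (metis in_set_conv_nth)
  then show ?thesis by (auto simp: shelling_stage_def)
qed (simp add: shelling_stage_def horn_chains_def)

lemma shelling_horn_chains:
  "shelling m n m (horn_chains m n i) shelling_list (map (apex i) shelling_list)"
  unfolding shelling_def
proof (intro conjI allI impI ballI)
  show "down_closed (horn_chains m n i)" by (rule down_closed_horn_chains)
  show "length (map (apex i) shelling_list) = length shelling_list" by simp
next
  fix l assume l: "l < length shelling_list"
  have \<tau>: "shelling_list ! l \<in> shelling_chains m n i" by (rule shelling_list_nth[OF l])
  show "grid_chain m n (shelling_list ! l)" using \<tau> by (simp add: shelling_chains_def spanning_def)
  show "map (apex i) shelling_list ! l \<in> shelling_list ! l"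
    using \<tau> l by (simp add: shelling_chains_def)
  show "Suc m \<le> card (shelling_list ! l)" using \<tau> by (rule card_shelling_chains)
  show "shelling_list ! l - {map (apex i) shelling_list ! l}
      \<notin> shelling_stage (horn_chains m n i) shelling_list l"
    using apex_facet_not_in_shelling_stage[OF l] l by simp
  fix v assume "v \<in> shelling_list ! l" "v \<noteq> map (apex i) shelling_list ! l"
  then show "shelling_list ! l - {v} \<in> shelling_stage (horn_chains m n i) shelling_list l"
    using facet_in_shelling_stage[OF l] l by simp
next
  fix l assume l: "Suc l < length shelling_list"
  show "card (shelling_list ! l) \<le> card (shelling_list ! Suc l)"
  proof (rule ccontr)
    assume "\<not> ?thesis"
    then have "shelling_key n i (shelling_list ! Suc l) < shelling_key n i (shelling_list ! l)"
      using shelling_key_less_card shelling_list_nth[of "Suc l"] l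
      by (simp add: shelling_chains_def)
    then show False using shelling_key_mono[of l "Suc l"] l by simp
  qed
next
  fix C assume "grid_chain m n C"
  then show "C \<in> shelling_stage (horn_chains m n i) shelling_list (length shelling_list)"
    by (rule grid_chain_in_final_shelling_stage)
qed

lemma expansion_horn_prism1: "expansion m (horn_prism1 m n i) (prism m n) act_prod"
  unfolding horn_prism1_eq_subprism by (rule expansion_of_shelling[OF shelling_horn_chains])

end

theorem lemma4p1:
  shows "(\<forall>m n i. 1 \<le> m \<and> i \<le> m \<longrightarrow>
            expansion m (horn_prism1 m n i) (prism m n) act_prod) \<and>
         (\<forall>m n j. 1 \<le> n \<and> j \<le> n \<longrightarrow>
            expansion n (horn_prism2 m n j) (prism m n) act_prod)"
proof (intro conjI allI impI)
  fix m n i :: nat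
  assume "1 \<le> m \<and> i \<le> m"
  then interpret prism_horn m n i by unfold_locales auto
  show "expansion m (horn_prism1 m n i) (prism m n) act_prod" by (rule expansion_horn_prism1)
next
  fix m n j :: nat
  assume "1 \<le> n \<and> j \<le> n"
  then interpret prism_horn n m j by unfold_locales auto
  show "expansion n (horn_prism2 m n j) (prism m n) act_prod"
    unfolding horn_prism2_eq_subprism
    by (rule expansion_of_shelling[OF shelling_swap_chain[OF shelling_horn_chains]])
qed

end
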